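(* Let $\mathcal{D}$ be an admissible set of domains on a topological space $X$. Then the partially ordered commutative ring $\mathscr{C}_\approx(\mathcal{D})$ is strongly localizable.
   Context: An admissible set of domains on $X$ is a set $\mathcal{D}$ of open subsets of $X$ with $X\in\mathcal{D}$ and $A\cap B\in\mathcal{D}$ for all $A,B\in\mathcal{D}$. On $\bigcup_{A\in\mathcal{D}}\mathscr{C}(A)$ ($\mathscr{C}(A)$ = continuous real-valued functions on $A$) define $f+g$ and $fg$ pointwise on $\operatorname{dom}f\cap\operatorname{dom}g$; $f\approx g$ iff there is $A\in\mathcal{D}$ with $A\subseteq\operatorname{dom}f\cap\operatorname{dom}g$ and $f|_A=g|_A$. $\mathscr{C}_\approx(\mathcal{D})$ is the quotient commutative ring, with order $[f]\le[g]$ iff there is $A\in\mathcal{D}$, $A\subseteq\operatorname{dom}f\cap\operatorname{dom}g$, with $f|_A\le g|_A$ pointwise. For a commutative ring $R$ with translation-invariant partial order and positive cone $R^+$: $\mathrm{Loc}(R)$ is the set of $s\in1+R^+$ such that $rs\in R^+$ implies $r\in R^+$ for all $r\in R$; $R$ is strongly localizable if $r^2\in R^+$ for all $r$ and $\mathrm{Loc}(R)=1+R^+$. *)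

theory Defs
  imports "HOL-Analysis.Analysis"
begin

record 'r po_ring =
  pr_carrier :: "'r set"
  pr_add :: "'r \<Rightarrow> 'r \<Rightarrow> 'r"
  pr_mult :: "'r \<Rightarrow> 'r \<Rightarrow> 'r"
  pr_zero :: "'r"
  pr_one :: "'r"
  pr_le :: "'r \<Rightarrow> 'r \<Rightarrow> bool"

definition pos_cone :: "'r po_ring \<Rightarrow> 'r set" where
  "pos_cone R = {r \<in> pr_carrier R. pr_le R (pr_zero R) r}"

definition one_plus_pos :: "'r po_ring \<Rightarrow> 'r set" where
  "one_plus_pos R = {pr_add R (pr_one R) p | p. p \<in> pos_cone R}"

definition Loc :: "'r po_ring \<Rightarrow> 'r set" where
  "Loc R = {s \<in> one_plus_pos R.
     \<forall>r \<in> pr_carrier R. pr_mult R r s \<in> pos_cone R \<longrightarrow> r \<in> pos_cone R}"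

definition strongly_localizable :: "'r po_ring \<Rightarrow> bool" where
  "strongly_localizable R \<longleftrightarrow>
     (\<forall>r \<in> pr_carrier R. pr_mult R r r \<in> pos_cone R) \<and> Loc R = one_plus_pos R"

definition admissible_domains :: "'a topology \<Rightarrow> 'a set set \<Rightarrow> bool" where
  "admissible_domains X D \<longleftrightarrow>
     (\<forall>A \<in> D. openin X A) \<and> topspace X \<in> D \<and> (\<forall>A \<in> D. \<forall>B \<in> D. A \<inter> B \<in> D)"

text \<open>A partial function is represented by its domain together with a function
  (whose values outside the domain are irrelevant).\<close>

definition CD_funs :: "'a topology \<Rightarrow> 'a set set \<Rightarrow> ('a set \<times> ('a \<Rightarrow> real)) set" where
  "CD_funs X D = {(A, f). A \<in> D \<and> continuous_map (subtopology X A) euclideanreal f}"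

definition CD_rel :: "'a topology \<Rightarrow> 'a set set
    \<Rightarrow> (('a set \<times> ('a \<Rightarrow> real)) \<times> ('a set \<times> ('a \<Rightarrow> real))) set" where
  "CD_rel X D = {((A, f), (B, g)). (A, f) \<in> CD_funs X D \<and> (B, g) \<in> CD_funs X D \<and>
      (\<exists>C \<in> D. C \<subseteq> A \<inter> B \<and> (\<forall>x \<in> C. f x = g x))}"

definition fadd :: "'a set \<times> ('a \<Rightarrow> real) \<Rightarrow> 'a set \<times> ('a \<Rightarrow> real) \<Rightarrow> 'a set \<times> ('a \<Rightarrow> real)" where
  "fadd p q = (fst p \<inter> fst q, \<lambda>x. snd p x + snd q x)"

definition fmult :: "'a set \<times> ('a \<Rightarrow> real) \<Rightarrow> 'a set \<times> ('a \<Rightarrow> real) \<Rightarrow> 'a set \<times> ('a \<Rightarrow> real)" where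
  "fmult p q = (fst p \<inter> fst q, \<lambda>x. snd p x * snd q x)"

definition C_approx :: "'a topology \<Rightarrow> 'a set set \<Rightarrow> ('a set \<times> ('a \<Rightarrow> real)) set po_ring" where
  "C_approx X D =
    \<lparr> pr_carrier = CD_funs X D // CD_rel X D,
      pr_add = (\<lambda>c d. \<Union>p \<in> c. \<Union>q \<in> d. CD_rel X D `` {fadd p q}),
      pr_mult = (\<lambda>c d. \<Union>p \<in> c. \<Union>q \<in> d. CD_rel X D `` {fmult p q}),
      pr_zero = CD_rel X D `` {(topspace X, \<lambda>_. 0)},
      pr_one = CD_rel X D `` {(topspace X, \<lambda>_. 1)},
      pr_le = (\<lambda>c d. \<exists>p \<in> c. \<exists>q \<in> d. \<exists>C \<in> D. C \<subseteq> fst p \<inter> fst q \<and>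
                  (\<forall>x \<in> C. snd p x \<le> snd q x)) \<rparr>"

end

theory Submission
  imports Defs
begin

text \<open>Since \<open>D\<close> is closed under finite intersections, finitely many properties that each
  hold on some domain of \<open>D\<close> hold simultaneously on one domain. Hence the ring operations
  and the order of \<open>C_approx X D\<close> can be computed on representatives, and a class \<open>[f]\<close> is
  positive iff \<open>f \<ge> 0\<close> on some domain of \<open>D\<close>. Squares are then pointwise nonnegative,
  and if \<open>s = 1 + p\<close> with \<open>p \<ge> 0\<close> and \<open>r s \<ge> 0\<close> on a common domain, then \<open>s \<ge> 1\<close> there,
  so \<open>r \<ge> 0\<close> on it.\<close>

lemma CD_funs_iff:
  "p \<in> CD_funs X D \<longleftrightarrow>
     fst p \<in> D \<and> continuous_map (subtopology X (fst p)) euclideanreal (snd p)"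
  by (cases p) (auto simp: CD_funs_def)

lemma CD_rel_iff:
  "(p, q) \<in> CD_rel X D \<longleftrightarrow> p \<in> CD_funs X D \<and> q \<in> CD_funs X D \<and>
     (\<exists>C \<in> D. C \<subseteq> fst p \<inter> fst q \<and> (\<forall>x \<in> C. snd p x = snd q x))"
  by (cases p; cases q) (auto simp: CD_rel_def)

lemma pr_le_C_approx_iff:
  "pr_le (C_approx X D) c d \<longleftrightarrow>
     (\<exists>p \<in> c. \<exists>q \<in> d. \<exists>C \<in> D. C \<subseteq> fst p \<inter> fst q \<and> (\<forall>x \<in> C. snd p x \<le> snd q x))"
  by (simp add: C_approx_def)

context
  fixes X :: "'a topology" and D :: "'a set set"
  assumes adm: "admissible_domains X D"
begin

lemma admissible_domains_Int: "A \<in> D \<Longrightarrow> B \<in> D \<Longrightarrow> A \<inter> B \<in> D"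
  using adm by (simp add: admissible_domains_def)

lemma admissible_domains_subset_topspace: "A \<in> D \<Longrightarrow> A \<subseteq> topspace X"
  using adm by (auto simp: admissible_domains_def dest: openin_subset)

lemma const_in_CD_funs: "(topspace X, \<lambda>_. c) \<in> CD_funs X D"
  using adm by (simp add: admissible_domains_def CD_funs_def)

lemma equiv_CD_rel: "equiv (CD_funs X D) (CD_rel X D)"
proof (rule equivI)
  show "CD_rel X D \<subseteq> CD_funs X D \<times> CD_funs X D"
    by (auto simp: CD_rel_def)
  show "refl_on (CD_funs X D) (CD_rel X D)"
    by (auto simp: refl_on_def CD_rel_iff CD_funs_iff)
  show "sym (CD_rel X D)"
    unfolding sym_def CD_rel_iff by (metis Int_commute)
  show "trans (CD_rel X D)"
  proof (rule transI)
    fix p q r assume "(p, q) \<in> CD_rel X D" "(q, r) \<in> CD_rel X D"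
    then obtain C1 C2 where "C1 \<in> D" "C1 \<subseteq> fst p \<inter> fst q" "\<forall>x \<in> C1. snd p x = snd q x"
      and "C2 \<in> D" "C2 \<subseteq> fst q \<inter> fst r" "\<forall>x \<in> C2. snd q x = snd r x"
      and "p \<in> CD_funs X D" "r \<in> CD_funs X D"
      by (auto simp: CD_rel_iff)
    then show "(p, r) \<in> CD_rel X D"
      unfolding CD_rel_iff by (intro conjI bexI[of _ "C1 \<inter> C2"] admissible_domains_Int) auto
  qed
qed

lemma fadd_in_CD_funs:
  assumes "p \<in> CD_funs X D" "q \<in> CD_funs X D"
  shows "fadd p q \<in> CD_funs X D"
  using assms admissible_domains_Int
  by (auto simp: CD_funs_iff fadd_def
      intro!: continuous_map_add elim: continuous_map_from_subtopology_mono)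

lemma fmult_in_CD_funs:
  assumes "p \<in> CD_funs X D" "q \<in> CD_funs X D"
  shows "fmult p q \<in> CD_funs X D"
  using assms admissible_domains_Int
  by (auto simp: CD_funs_iff fmult_def
      intro!: continuous_map_real_mult elim: continuous_map_from_subtopology_mono)

lemma CD_rel_pointwise:
  assumes "(a, a') \<in> CD_rel X D" "(b, b') \<in> CD_rel X D"
    and "(fst a \<inter> fst b, \<lambda>x. f (snd a x) (snd b x)) \<in> CD_funs X D"
    and "(fst a' \<inter> fst b', \<lambda>x. f (snd a' x) (snd b' x)) \<in> CD_funs X D"
  shows "((fst a \<inter> fst b, \<lambda>x. f (snd a x) (snd b x)),
          (fst a' \<inter> fst b', \<lambda>x. f (snd a' x) (snd b' x))) \<in> CD_rel X D"
proof -
  obtain C1 C2 where "C1 \<in> D" "C1 \<subseteq> fst a \<inter> fst a'" "\<forall>x \<in> C1. snd a x = snd a' x"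
    and "C2 \<in> D" "C2 \<subseteq> fst b \<inter> fst b'" "\<forall>x \<in> C2. snd b x = snd b' x"
    using assms(1,2) by (auto simp: CD_rel_iff)
  with assms(3,4) show ?thesis
    unfolding CD_rel_iff by (intro conjI bexI[of _ "C1 \<inter> C2"] admissible_domains_Int) auto
qed

lemma congruent2_fadd: "congruent2 (CD_rel X D) (CD_rel X D) (\<lambda>p q. CD_rel X D `` {fadd p q})"
proof (rule congruent2I')
  fix a a' b b' assume rel: "(a, a') \<in> CD_rel X D" "(b, b') \<in> CD_rel X D"
  then have "a \<in> CD_funs X D" "a' \<in> CD_funs X D" "b \<in> CD_funs X D" "b' \<in> CD_funs X D"
    by (auto simp: CD_rel_iff)
  with rel have "(fadd a b, fadd a' b') \<in> CD_rel X D"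
    unfolding fadd_def by (intro CD_rel_pointwise) (auto intro: fadd_in_CD_funs[unfolded fadd_def])
  then show "CD_rel X D `` {fadd a b} = CD_rel X D `` {fadd a' b'}"
    by (rule equiv_class_eq[OF equiv_CD_rel])
qed

lemma congruent2_fmult: "congruent2 (CD_rel X D) (CD_rel X D) (\<lambda>p q. CD_rel X D `` {fmult p q})"
proof (rule congruent2I')
  fix a a' b b' assume rel: "(a, a') \<in> CD_rel X D" "(b, b') \<in> CD_rel X D"
  then have "a \<in> CD_funs X D" "a' \<in> CD_funs X D" "b \<in> CD_funs X D" "b' \<in> CD_funs X D"
    by (auto simp: CD_rel_iff)
  with rel have "(fmult a b, fmult a' b') \<in> CD_rel X D"
    unfolding fmult_def by (intro CD_rel_pointwise) (auto intro: fmult_in_CD_funs[unfolded fmult_def])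
  then show "CD_rel X D `` {fmult a b} = CD_rel X D `` {fmult a' b'}"
    by (rule equiv_class_eq[OF equiv_CD_rel])
qed

lemma pr_add_C_approx_classes:
  assumes "a \<in> CD_funs X D" "b \<in> CD_funs X D"
  shows "pr_add (C_approx X D) (CD_rel X D `` {a}) (CD_rel X D `` {b}) = CD_rel X D `` {fadd a b}"
  using UN_equiv_class2[OF equiv_CD_rel equiv_CD_rel congruent2_fadd assms]
  by (simp add: C_approx_def)

lemma pr_mult_C_approx_classes:
  assumes "a \<in> CD_funs X D" "b \<in> CD_funs X D"
  shows "pr_mult (C_approx X D) (CD_rel X D `` {a}) (CD_rel X D `` {b}) = CD_rel X D `` {fmult a b}"
  using UN_equiv_class2[OF equiv_CD_rel equiv_CD_rel congruent2_fmult assms]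
  by (simp add: C_approx_def)

lemma pr_le_C_approx_classes:
  assumes "a \<in> CD_funs X D" "b \<in> CD_funs X D"
  shows "pr_le (C_approx X D) (CD_rel X D `` {a}) (CD_rel X D `` {b}) \<longleftrightarrow>
    (\<exists>C \<in> D. C \<subseteq> fst a \<inter> fst b \<and> (\<forall>x \<in> C. snd a x \<le> snd b x))"
proof
  assume "pr_le (C_approx X D) (CD_rel X D `` {a}) (CD_rel X D `` {b})"
  then obtain p q C where "(a, p) \<in> CD_rel X D" "(b, q) \<in> CD_rel X D"
    and "C \<in> D" "C \<subseteq> fst p \<inter> fst q" "\<forall>x \<in> C. snd p x \<le> snd q x"
    unfolding pr_le_C_approx_iff by blast
  moreover obtain C1 C2 where "C1 \<in> D" "C1 \<subseteq> fst a \<inter> fst p" "\<forall>x \<in> C1. snd a x = snd p x"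
    and "C2 \<in> D" "C2 \<subseteq> fst b \<inter> fst q" "\<forall>x \<in> C2. snd b x = snd q x"
    using calculation(1,2) by (auto simp: CD_rel_iff)
  ultimately show "\<exists>C \<in> D. C \<subseteq> fst a \<inter> fst b \<and> (\<forall>x \<in> C. snd a x \<le> snd b x)"
    by (intro bexI[of _ "C \<inter> C1 \<inter> C2"] admissible_domains_Int) auto
next
  assume "\<exists>C \<in> D. C \<subseteq> fst a \<inter> fst b \<and> (\<forall>x \<in> C. snd a x \<le> snd b x)"
  moreover have "a \<in> CD_rel X D `` {a}" "b \<in> CD_rel X D `` {b}"
    using assms by (simp_all add: equiv_class_self[OF equiv_CD_rel] del: Image_singleton_iff)
  ultimately show "pr_le (C_approx X D) (CD_rel X D `` {a}) (CD_rel X D `` {b})"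
    unfolding pr_le_C_approx_iff by blast
qed

lemma class_in_pos_cone_iff:
  assumes "a \<in> CD_funs X D"
  shows "CD_rel X D `` {a} \<in> pos_cone (C_approx X D) \<longleftrightarrow>
    (\<exists>C \<in> D. C \<subseteq> fst a \<and> (\<forall>x \<in> C. 0 \<le> snd a x))"
proof -
  have "CD_rel X D `` {a} \<in> pos_cone (C_approx X D) \<longleftrightarrow>
      pr_le (C_approx X D) (CD_rel X D `` {(topspace X, \<lambda>_. 0)}) (CD_rel X D `` {a})"
    using assms by (simp add: pos_cone_def C_approx_def quotientI)
  also have "\<dots> \<longleftrightarrow> (\<exists>C \<in> D. C \<subseteq> topspace X \<inter> fst a \<and> (\<forall>x \<in> C. 0 \<le> snd a x))"
    using pr_le_C_approx_classes[OF const_in_CD_funs assms] by simp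
  also have "\<dots> \<longleftrightarrow> (\<exists>C \<in> D. C \<subseteq> fst a \<and> (\<forall>x \<in> C. 0 \<le> snd a x))"
    using assms admissible_domains_subset_topspace by (auto simp: CD_funs_iff)
  finally show ?thesis .
qed

lemma square_in_pos_cone:
  assumes "r \<in> pr_carrier (C_approx X D)"
  shows "pr_mult (C_approx X D) r r \<in> pos_cone (C_approx X D)"
proof -
  obtain a where a: "a \<in> CD_funs X D" "r = CD_rel X D `` {a}"
    using assms by (auto simp: C_approx_def elim: quotientE)
  moreover have "fst a \<in> D"
    using a(1) by (simp add: CD_funs_iff)
  ultimately show ?thesis
    using class_in_pos_cone_iff[OF fmult_in_CD_funs[OF a(1) a(1)]]
    by (auto simp: pr_mult_C_approx_classes fmult_def)
qed

lemma one_plus_pos_subset_Loc: "one_plus_pos (C_approx X D) \<subseteq> Loc (C_approx X D)"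
proof
  fix s assume s: "s \<in> one_plus_pos (C_approx X D)"
  then obtain p where p: "p \<in> pos_cone (C_approx X D)"
    and s_eq: "s = pr_add (C_approx X D) (pr_one (C_approx X D)) p"
    by (auto simp: one_plus_pos_def)
  then obtain b where b: "b \<in> CD_funs X D" "p = CD_rel X D `` {b}"
    by (auto simp: pos_cone_def C_approx_def elim: quotientE)
  with p obtain C1 where C1: "C1 \<in> D" "\<forall>x \<in> C1. 0 \<le> snd b x"
    by (auto simp: class_in_pos_cone_iff)
  define u where "u = fadd (topspace X, \<lambda>_. 1) b"
  have u: "u \<in> CD_funs X D"
    unfolding u_def using b(1) by (intro fadd_in_CD_funs const_in_CD_funs)
  have "pr_one (C_approx X D) = CD_rel X D `` {(topspace X, \<lambda>_. 1)}"
    by (simp add: C_approx_def)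
  with s_eq b have s_class: "s = CD_rel X D `` {u}"
    by (simp add: u_def pr_add_C_approx_classes const_in_CD_funs)
  have "r \<in> pos_cone (C_approx X D)"
    if r: "r \<in> pr_carrier (C_approx X D)"
      and rs: "pr_mult (C_approx X D) r s \<in> pos_cone (C_approx X D)" for r
  proof -
    obtain a where a: "a \<in> CD_funs X D" "r = CD_rel X D `` {a}"
      using r by (auto simp: C_approx_def elim: quotientE)
    have "CD_rel X D `` {fmult a u} \<in> pos_cone (C_approx X D)"
      using rs by (simp add: a(2) s_class pr_mult_C_approx_classes a(1) u)
    then obtain C2 where C2: "C2 \<in> D" "C2 \<subseteq> fst a"
      and prod_nonneg: "\<forall>x \<in> C2. 0 \<le> snd a x * (1 + snd b x)"
      unfolding class_in_pos_cone_iff[OF fmult_in_CD_funs[OF a(1) u]]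
      by (auto simp: fmult_def u_def fadd_def)
    have "0 \<le> snd a x" if x: "x \<in> C1 \<inter> C2" for x
    proof -
      have "0 < 1 + snd b x"
        using x C1(2) by (simp add: add_pos_nonneg)
      moreover have "0 \<le> snd a x * (1 + snd b x)"
        using x prod_nonneg by blast
      ultimately show ?thesis
        by (simp add: zero_le_mult_iff)
    qed
    with C1(1) C2 a show ?thesis
      by (auto simp: class_in_pos_cone_iff intro!: bexI[of _ "C1 \<inter> C2"] admissible_domains_Int)
  qed
  with s show "s \<in> Loc (C_approx X D)"
    by (simp add: Loc_def)
qed

end

theorem proposition10:
  fixes X :: "'a topology" and D :: "'a set set"
  assumes "admissible_domains X D"
  shows "strongly_localizable (C_approx X D)"
  using square_in_pos_cone[OF assms] one_plus_pos_subset_Loc[OF assms]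
  by (auto simp: strongly_localizable_def Loc_def)

end
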